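(* Let $(H,\lambda)$ be a friendly pair with associated rational map $\varphi:\mathbb{R}^{n+1}\dashrightarrow\mathbb{R}^{n+1}$, $\varphi_i(v)=\lambda_i\prod_{j=1}^m(\sum_{k=0}^n h_{jk}v_k)^{h_{ji}}$. If there exists a vector $u\in\mathbb{R}^{n+1}$ such that $\varphi(u)>0$ (all coordinates positive), then $\varphi(v)>0$ for all $v\in\mathbb{R}^{n+1}_{>0}$ at which $\varphi$ is defined.
   Context: A Horn matrix is an $m\times(n+1)$ integer matrix $H=(h_{ij})$ (rows $j=1,\dots,m$, columns $0,\dots,n$) whose columns sum to zero. $(H,\lambda)$ is a friendly pair if $H$ is a Horn matrix and $\lambda\in\mathbb{R}^{n+1}$ has all entries nonzero and satisfies $\sum_{i=0}^n\varphi_i(v)=1$ identically in $\mathbb{R}(v_0,\dots,v_n)$. *)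

theory Defs
  imports Complex_Main
begin

text \<open>A Horn matrix H is an m x (n+1) integer matrix with rows j = 1..m and
columns i = 0..n, represented as a function H j i (entries outside this range
are irrelevant).\<close>

definition horn_matrix :: "nat \<Rightarrow> nat \<Rightarrow> (nat \<Rightarrow> nat \<Rightarrow> int) \<Rightarrow> bool" where
  "horn_matrix m n H \<longleftrightarrow> (\<forall>i\<in>{0..n}. (\<Sum>j=1..m. H j i) = 0)"

definition lin_form :: "nat \<Rightarrow> (nat \<Rightarrow> nat \<Rightarrow> int) \<Rightarrow> nat \<Rightarrow> (nat \<Rightarrow> real) \<Rightarrow> real" where
  "lin_form n H j v = (\<Sum>k=0..n. of_int (H j k) * v k)"

definition horn_phi :: "nat \<Rightarrow> nat \<Rightarrow> (nat \<Rightarrow> nat \<Rightarrow> int) \<Rightarrow> (nat \<Rightarrow> real)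
    \<Rightarrow> (nat \<Rightarrow> real) \<Rightarrow> nat \<Rightarrow> real" where
  "horn_phi m n H lam v i = lam i * (\<Prod>j=1..m. (lin_form n H j v) powi (H j i))"

definition phi_defined :: "nat \<Rightarrow> nat \<Rightarrow> (nat \<Rightarrow> nat \<Rightarrow> int) \<Rightarrow> (nat \<Rightarrow> real) \<Rightarrow> bool" where
  "phi_defined m n H v \<longleftrightarrow>
     (\<forall>i\<in>{0..n}. \<forall>j\<in>{1..m}. H j i < 0 \<longrightarrow> lin_form n H j v \<noteq> 0)"

text \<open>This complement of a finite union of hyperplanes is Zariski dense, so an identity of
rational functions is the same as an identity of their evaluations at all generic points.\<close>
definition horn_generic :: "nat \<Rightarrow> nat \<Rightarrow> (nat \<Rightarrow> nat \<Rightarrow> int) \<Rightarrow> (nat \<Rightarrow> real) \<Rightarrow> bool" where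
  "horn_generic m n H v \<longleftrightarrow>
     (\<forall>j\<in>{1..m}. (\<exists>k\<in>{0..n}. H j k \<noteq> 0) \<longrightarrow> lin_form n H j v \<noteq> 0)"

definition friendly_pair :: "nat \<Rightarrow> nat \<Rightarrow> (nat \<Rightarrow> nat \<Rightarrow> int) \<Rightarrow> (nat \<Rightarrow> real) \<Rightarrow> bool" where
  "friendly_pair m n H lam \<longleftrightarrow>
     horn_matrix m n H \<and> (\<forall>i\<in>{0..n}. lam i \<noteq> 0) \<and>
     (\<forall>v. horn_generic m n H v \<longrightarrow> (\<Sum>i=0..n. horn_phi m n H lam v i) = 1)"

end

theory Submission
  imports Defs "HOL-Computational_Algebra.Polynomial"
begin

(* Differentiating the identity sum_i phi_i = 1 at a generic point w, first in the coordinate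
   directions and then repeatedly along w + s phi(w), shows that the ratios
   q_j(w) = l_j(phi(w)) / l_j(w) satisfy sum_j h_ji q_j^k = 0 for all k, so the rows sharing a
   value of q_j have zero column sums. Hence l_j(w + T phi(w)) = l_j(w) (1 + T q_j) leaves phi
   unchanged, and for large T the point u + T phi(u) is positive and generic with positive image.
   Now follow phi along the segment from this point to v. As long as all phi_i are positive,
   sum_i phi_i = 1 bounds them by 1, so at a parameter t1 where some linear forms vanish no
   phi_i has a pole: the total orders e_i are nonnegative. Since the vanishing forms satisfy
   sum_i e_i w_i(t1) = 0 with w(t1) > 0, all e_i are 0 and no phi_i changes sign at t1. *)

lemma power_int_sum:
  fixes x :: "'a::field"
  assumes "x \<noteq> 0"
  shows "x powi (\<Sum>j\<in>A. e j) = (\<Prod>j\<in>A. x powi e j)"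
  using assms by (induction A rule: infinite_finite_induct) (auto simp: power_int_add)

lemma power_sums_zero_imp_level_sums_zero:
  fixes c q :: "'j \<Rightarrow> 'a::field"
  assumes "finite J" and power_sums: "\<And>k. (\<Sum>j\<in>J. c j * q j ^ k) = 0"
  shows "(\<Sum>j\<in>{j\<in>J. q j = \<alpha>}. c j) = 0"
proof -
  define B where "B = q ` J - {\<alpha>}"
  define g where "g = (\<Prod>\<beta>\<in>B. [:-\<beta>, 1:])"
  have "finite B" unfolding B_def using assms(1) by simp
  have poly_g: "poly g x = (\<Prod>\<beta>\<in>B. x - \<beta>)" for x
    unfolding g_def by (simp add: poly_prod)
  have "(\<Sum>j\<in>J. c j * poly g (q j)) = (\<Sum>t\<le>degree g. coeff g t * (\<Sum>j\<in>J. c j * q j ^ t))"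
    by (simp add: poly_altdef sum_distrib_left sum.swap[of _ J] mult_ac)
  also have "\<dots> = 0" by (simp add: power_sums)
  also have "(\<Sum>j\<in>J. c j * poly g (q j)) = (\<Sum>j\<in>{j\<in>J. q j = \<alpha>}. c j) * poly g \<alpha>"
  proof -
    have "poly g (q j) = 0" if "j \<in> J" "q j \<noteq> \<alpha>" for j
      using that \<open>finite B\<close> by (auto simp: poly_g B_def)
    then have "(\<Sum>j\<in>J. c j * poly g (q j)) = (\<Sum>j\<in>J. if q j = \<alpha> then c j * poly g \<alpha> else 0)"
      by (intro sum.cong) auto
    then show ?thesis
      using assms(1) by (simp add: sum.If_cases sum_distrib_right Int_def conj_commute)
  qed
  moreover have "poly g \<alpha> \<noteq> 0"
    using \<open>finite B\<close> by (simp add: poly_g B_def)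
  ultimately show ?thesis by simp
qed

lemma prod_power_int_eq_1_if_level_sums_zero:
  fixes g :: "'b \<Rightarrow> 'a::field"
  assumes "finite J" and level_sums: "\<And>\<alpha>. (\<Sum>j\<in>{j\<in>J. q j = \<alpha>}. e j) = 0"
    and nonzero: "\<And>j. j \<in> J \<Longrightarrow> g (q j) \<noteq> 0"
  shows "(\<Prod>j\<in>J. g (q j) powi e j) = 1"
proof -
  have "(\<Prod>j\<in>J. g (q j) powi e j) = (\<Prod>\<alpha>\<in>q ` J. \<Prod>j\<in>{j\<in>J. q j = \<alpha>}. g (q j) powi e j)"
    by (rule prod.group[symmetric]) (use assms(1) in auto)
  also have "\<dots> = (\<Prod>\<alpha>\<in>q ` J. g \<alpha> powi (\<Sum>j\<in>{j\<in>J. q j = \<alpha>}. e j))"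
    using nonzero by (intro prod.cong refl) (auto simp: power_int_sum)
  also have "\<dots> = 1" by (simp add: level_sums)
  finally show ?thesis .
qed

lemma unit_interval_continuation:
  fixes Q :: "real \<Rightarrow> bool"
  assumes step: "\<And>t. t \<in> {0..1} \<Longrightarrow> (\<And>s. s \<in> {0..<t} \<Longrightarrow> Q s) \<Longrightarrow> eventually Q (nhds t)"
    and "t \<in> {0..1}"
  shows "Q t"
proof -
  define S where "S = {t\<in>{0..1}. \<forall>s\<in>{0..<t}. Q s}"
  define t1 where "t1 = Sup S"
  have "0 \<in> S" unfolding S_def by simp
  have "bdd_above S" unfolding S_def by (rule bdd_aboveI[of _ 1]) auto
  have t1: "t1 \<in> {0..1}"
    using \<open>0 \<in> S\<close> \<open>bdd_above S\<close> unfolding t1_def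
    by (auto intro!: cSup_upper cSup_least simp: S_def)
  have below: "Q s" if s: "s \<in> {0..<t1}" for s
  proof -
    obtain x where "x \<in> S" "s < x"
      using s \<open>0 \<in> S\<close> unfolding t1_def by (metis atLeastLessThan_iff empty_iff less_cSupD)
    then show ?thesis using s unfolding S_def by auto
  qed
  obtain \<delta> where "\<delta> > 0" and near: "\<And>s. dist s t1 < \<delta> \<Longrightarrow> Q s"
    using step[OF t1 below] unfolding eventually_nhds_metric by blast
  define t2 where "t2 = min 1 (t1 + \<delta> / 2)"
  have "Q s" if "s \<in> {0..<t2}" for s
    using that below near[of s] by (cases "s < t1") (auto simp: t2_def dist_real_def)
  then have "t2 \<in> S"
    unfolding S_def using t1 \<open>\<delta> > 0\<close> by (auto simp: t2_def)
  then have "t2 \<le> t1"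
    unfolding t1_def using \<open>bdd_above S\<close> by (rule cSup_upper)
  then have "t1 = 1" using t1 \<open>\<delta> > 0\<close> unfolding t2_def by auto
  then show ?thesis
    using assms(2) below near[of t1] \<open>\<delta> > 0\<close> by (cases "t = 1") auto
qed

lemma prod_power_int_affine_split:
  fixes a b :: "'j \<Rightarrow> real"
  assumes "finite J" and "t \<noteq> t0"
  defines "Z \<equiv> {j\<in>J. a j + t0 * b j = 0}"
  shows "(\<Prod>j\<in>J. (a j + t * b j) powi e j) =
    (\<Prod>j\<in>Z. b j powi e j) * (\<Prod>j\<in>J - Z. (a j + t * b j) powi e j) * (t - t0) powi (\<Sum>j\<in>Z. e j)"
proof -
  have "(\<Prod>j\<in>Z. (a j + t * b j) powi e j) = (\<Prod>j\<in>Z. b j powi e j * (t - t0) powi e j)"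
  proof (rule prod.cong)
    fix j assume "j \<in> Z"
    then have "a j + t * b j = b j * (t - t0)" unfolding Z_def by (simp add: algebra_simps)
    then show "(a j + t * b j) powi e j = b j powi e j * (t - t0) powi e j"
      by (simp add: power_int_mult_distrib)
  qed simp
  also have "\<dots> = (\<Prod>j\<in>Z. b j powi e j) * (t - t0) powi (\<Sum>j\<in>Z. e j)"
    using assms(2) by (simp add: prod.distrib power_int_sum)
  moreover have "(\<Prod>j\<in>J. (a j + t * b j) powi e j) =
      (\<Prod>j\<in>J - Z. (a j + t * b j) powi e j) * (\<Prod>j\<in>Z. (a j + t * b j) powi e j)"
    by (rule prod.subset_diff) (use assms(1) in \<open>auto simp: Z_def\<close>)
  ultimately show ?thesis by (simp only: mult_ac)
qed

lemma power_int_exponent_nonneg_if_bounded: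
  fixes f g :: "real \<Rightarrow> real"
  assumes lim: "(g \<longlongrightarrow> c) (at_left t0)" and "c \<noteq> 0"
    and ev: "eventually (\<lambda>t. f t = g t * (t - t0) powi e \<and> \<bar>f t\<bar> \<le> 1) (at_left t0)"
  shows "e \<ge> 0"
proof (rule ccontr)
  assume "\<not> e \<ge> 0"
  define c2 where "c2 = \<bar>c\<bar> / 2"
  have "c2 > 0" unfolding c2_def using \<open>c \<noteq> 0\<close> by simp
  have "eventually (\<lambda>t. c2 < \<bar>g t\<bar>) (at_left t0)"
    by (rule order_tendstoD(1)[OF tendsto_rabs[OF lim]]) (use \<open>c \<noteq> 0\<close> in \<open>simp add: c2_def\<close>)
  moreover have "eventually (\<lambda>t. t \<in> {t0 - min 1 c2<..<t0}) (at_left t0)"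
    using \<open>c2 > 0\<close> by (intro eventually_at_left_real) simp
  ultimately have "eventually (\<lambda>t. c2 < \<bar>g t\<bar> \<and> t \<in> {t0 - min 1 c2<..<t0} \<and>
      f t = g t * (t - t0) powi e \<and> \<bar>f t\<bar> \<le> 1) (at_left t0)"
    using ev by eventually_elim blast
  then obtain t where t: "c2 < \<bar>g t\<bar>" "t \<in> {t0 - min 1 c2<..<t0}"
    "f t = g t * (t - t0) powi e" "\<bar>f t\<bar> \<le> 1"
    by (auto dest: eventually_happens)
  define r where "r = \<bar>t - t0\<bar>"
  have r: "0 < r" "r \<le> 1" "r < c2" using t(2) unfolding r_def by auto
  have "inverse r = r powi -1" by (simp add: power_int_minus)
  also have "\<dots> \<le> r powi e"
    using r \<open>\<not> e \<ge> 0\<close> by (intro power_int_decreasing) auto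
  finally have "c2 * inverse r \<le> \<bar>g t\<bar> * r powi e"
    using t(1) r by (intro mult_mono) auto
  also have "\<dots> = \<bar>f t\<bar>" using t(3) by (simp add: abs_mult power_int_abs r_def)
  finally have "c2 * inverse r \<le> 1" using t(4) by simp
  moreover have "1 < c2 * inverse r" using r by (simp add: field_simps)
  ultimately show False by simp
qed

lemma lin_form_add_scaled:
  "lin_form n H j (\<lambda>k. x k + s * y k) = lin_form n H j x + s * lin_form n H j y"
  unfolding lin_form_def by (simp add: sum.distrib sum_distrib_left algebra_simps)

lemma horn_phi_add_scaled:
  "horn_phi m n H lam (\<lambda>k. x k + s * y k) i =
     lam i * (\<Prod>j=1..m. (lin_form n H j x + s * lin_form n H j y) powi H j i)"
  unfolding horn_phi_def lin_form_add_scaled ..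

lemma has_field_derivative_eq_0_if_eventually_const:
  assumes "(f has_field_derivative D) (at x)" and "eventually (\<lambda>y. f y = f x) (nhds x)"
  shows "D = 0"
proof -
  have "((\<lambda>_. f x) has_field_derivative D) (at x)"
    using assms by (subst (asm) DERIV_cong_ev[OF refl assms(2) refl])
  then show ?thesis by (rule DERIV_unique) (rule DERIV_const)
qed

locale horn =
  fixes m n :: nat and H :: "nat \<Rightarrow> nat \<Rightarrow> int" and lam :: "nat \<Rightarrow> real"
begin

abbreviation lin :: "nat \<Rightarrow> (nat \<Rightarrow> real) \<Rightarrow> real" where
  "lin j w \<equiv> lin_form n H j w"

abbreviation phi :: "(nat \<Rightarrow> real) \<Rightarrow> nat \<Rightarrow> real" where
  "phi w i \<equiv> horn_phi m n H lam w i"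

abbreviation generic :: "(nat \<Rightarrow> real) \<Rightarrow> bool" where
  "generic w \<equiv> horn_generic m n H w"

lemma generic_row_eq_0:
  "generic w \<Longrightarrow> j \<in> {1..m} \<Longrightarrow> lin j w = 0 \<Longrightarrow> i \<in> {0..n} \<Longrightarrow> H j i = 0"
  unfolding horn_generic_def by force

lemma eventually_generic_line:
  assumes "generic w"
  shows "eventually (\<lambda>s. generic (\<lambda>k. w k + s * d k)) (nhds 0)"
proof -
  let ?N = "{j\<in>{1..m}. \<exists>k\<in>{0..n}. H j k \<noteq> 0}"
  have "eventually (\<lambda>s. lin j w + s * lin j d \<noteq> 0) (nhds 0)" if "j \<in> ?N" for j
  proof (rule tendsto_imp_eventually_ne)
    show "((\<lambda>s. lin j w + s * lin j d) \<longlongrightarrow> lin j w + 0 * lin j d) (nhds 0)"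
      by (intro tendsto_intros filterlim_ident)
    show "lin j w + 0 * lin j d \<noteq> 0"
      using assms that unfolding horn_generic_def by auto
  qed
  then have "eventually (\<lambda>s. \<forall>j\<in>?N. lin j w + s * lin j d \<noteq> 0) (nhds 0)"
    by (intro eventually_ball_finite) auto
  then show ?thesis
    by eventually_elim (auto simp: horn_generic_def lin_form_add_scaled)
qed

lemma has_field_derivative_phi_line:
  assumes "generic w" and i: "i \<in> {0..n}"
  shows "((\<lambda>s. phi (\<lambda>k. w k + s * d k) i) has_field_derivative
          phi w i * (\<Sum>j=1..m. of_int (H j i) * lin j d / lin j w)) (at 0)"
proof -
  define f where "f j s = (lin j w + s * lin j d) powi H j i" for j s
  have row: "H j i \<ge> 0 \<or> lin j w \<noteq> 0" if "j \<in> {1..m}" for j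
    using generic_row_eq_0[OF assms(1) that _ i] by auto
  have f0: "f j 0 \<noteq> 0" if "j \<in> {1..m}" for j
    using row[OF that] generic_row_eq_0[OF assms(1) that _ i] by (auto simp: f_def)
  have "(f j has_field_derivative of_int (H j i) * lin j w powi (H j i - 1) * lin j d) (at 0)"
    if "j \<in> {1..m}" for j
    unfolding f_def using row[OF that] by (auto intro!: derivative_eq_intros)
  from has_field_derivative_prod'[of "{1..m}" f 0, OF f0 this]
  have "((\<lambda>s. \<Prod>j=1..m. f j s) has_field_derivative (\<Prod>j=1..m. f j 0) *
      (\<Sum>j=1..m. of_int (H j i) * lin j w powi (H j i - 1) * lin j d / f j 0)) (at 0)"
    by simp
  moreover have "of_int (H j i) * lin j w powi (H j i - 1) * lin j d / f j 0
      = of_int (H j i) * lin j d / lin j w" if "j \<in> {1..m}" for j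
    using generic_row_eq_0[OF assms(1) that _ i]
    by (cases "lin j w = 0") (auto simp: f_def power_int_diff field_simps)
  ultimately have "((\<lambda>s. \<Prod>j=1..m. f j s) has_field_derivative (\<Prod>j=1..m. f j 0) *
      (\<Sum>j=1..m. of_int (H j i) * lin j d / lin j w)) (at 0)"
    by (metis (no_types, lifting) sum.cong)
  from DERIV_cmult[OF this, of "lam i"] show ?thesis
    by (simp add: horn_phi_add_scaled f_def horn_phi_def mult_ac)
qed

definition ratio :: "(nat \<Rightarrow> real) \<Rightarrow> nat \<Rightarrow> real" where
  "ratio w j = lin j (phi w) / lin j w"

lemma lin_phi_eq_ratio_mult:
  assumes "generic w" and "j \<in> {1..m}"
  shows "lin j (phi w) = ratio w j * lin j w"
proof (cases "lin j w = 0")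
  case True
  then have "\<forall>k\<in>{0..n}. H j k = 0" using generic_row_eq_0[OF assms] by blast
  then show ?thesis using True by (simp add: lin_form_def)
qed (simp add: ratio_def)

lemma lin_shift_along_phi:
  assumes "generic u" and "j \<in> {1..m}"
  shows "lin j (\<lambda>k. u k + T * phi u k) = lin j u * (1 + T * ratio u j)"
  using lin_phi_eq_ratio_mult[OF assms] by (simp add: lin_form_add_scaled algebra_simps)

lemma generic_if_phi_pos:
  assumes "phi_defined m n H u" and pos: "\<And>i. i \<in> {0..n} \<Longrightarrow> 0 < phi u i"
  shows "generic u"
  unfolding horn_generic_def
proof (intro ballI impI)
  fix j assume j: "j \<in> {1..m}" and "\<exists>k\<in>{0..n}. H j k \<noteq> 0"
  then obtain k where k: "k \<in> {0..n}" "H j k \<noteq> 0" by blast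
  show "lin j u \<noteq> 0"
  proof (cases "\<exists>i\<in>{0..n}. H j i < 0")
    case True
    then show ?thesis using assms(1) j unfolding phi_defined_def by blast
  next
    case False
    show ?thesis
    proof
      assume "lin j u = 0"
      moreover have "H j k > 0" using k False by force
      ultimately have "(\<Prod>j'=1..m. lin j' u powi H j' k) = 0"
        using j by (intro prod_zero) (auto intro!: bexI[of _ j])
      then have "phi u k = 0" by (simp add: horn_phi_def)
      then show False using pos[OF k(1)] by simp
    qed
  qed
qed

lemma generic_if_pos:
  assumes pos: "\<And>k. k \<in> {0..n} \<Longrightarrow> 0 < v k" and "phi_defined m n H v"
  shows "generic v"
  unfolding horn_generic_def
proof (intro ballI impI)
  fix j assume j: "j \<in> {1..m}" and "\<exists>k\<in>{0..n}. H j k \<noteq> 0"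
  then obtain k where k: "k \<in> {0..n}" "H j k \<noteq> 0" by blast
  show "lin j v \<noteq> 0"
  proof (cases "\<exists>i\<in>{0..n}. H j i < 0")
    case True
    then show ?thesis using assms(2) j unfolding phi_defined_def by blast
  next
    case False
    then have "0 < of_int (H j k) * v k" using k pos by force
    also have "\<dots> \<le> lin j v"
      unfolding lin_form_def using False k pos
      by (intro member_le_sum) (auto simp: not_less less_imp_le)
    finally show ?thesis by simp
  qed
qed

end

locale friendly = horn +
  assumes friendly: "friendly_pair m n H lam"
begin

lemma sum_phi_eq_1: "generic w \<Longrightarrow> (\<Sum>i=0..n. phi w i) = 1"
  using friendly unfolding friendly_pair_def by blast

lemma sum_lin_mult_ratio_eq_0:
  assumes "generic w"
  shows "(\<Sum>j=1..m. lin j d * ratio w j) = 0"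
proof -
  have "((\<lambda>s. \<Sum>i=0..n. phi (\<lambda>k. w k + s * d k) i) has_field_derivative
      (\<Sum>i=0..n. phi w i * (\<Sum>j=1..m. of_int (H j i) * lin j d / lin j w))) (at 0)"
    by (intro DERIV_sum has_field_derivative_phi_line[OF assms]) simp
  moreover have "eventually (\<lambda>s. (\<Sum>i=0..n. phi (\<lambda>k. w k + s * d k) i) =
      (\<Sum>i=0..n. phi (\<lambda>k. w k + 0 * d k) i)) (nhds 0)"
    using eventually_generic_line[OF assms, of d] by eventually_elim (simp add: sum_phi_eq_1 assms)
  ultimately have "(\<Sum>i=0..n. phi w i * (\<Sum>j=1..m. of_int (H j i) * lin j d / lin j w)) = 0"
    by (rule has_field_derivative_eq_0_if_eventually_const)
  moreover have "(\<Sum>i=0..n. phi w i * (\<Sum>j=1..m. of_int (H j i) * lin j d / lin j w))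
      = (\<Sum>j=1..m. lin j d * ratio w j)"
    by (simp add: ratio_def lin_form_def[of n H _ "phi w"] sum_distrib_left sum_distrib_right
          sum_divide_distrib sum.swap[of _ "{0..n}"] mult_ac)
  ultimately show ?thesis by simp
qed

lemma sum_row_mult_ratio_eq_0:
  assumes "generic w" and "i \<in> {0..n}"
  shows "(\<Sum>j=1..m. of_int (H j i) * ratio w j) = 0"
proof -
  have "lin j (\<lambda>k. if k = i then 1 else 0) = of_int (H j i)" for j
    using assms(2) by (simp add: lin_form_def if_distrib cong: if_cong)
  then show ?thesis
    using sum_lin_mult_ratio_eq_0[OF assms(1), of "\<lambda>k. if k = i then 1 else 0"] by simp
qed

lemma has_field_derivative_phi_along_phi:
  assumes "generic w" and "i \<in> {0..n}"
  shows "((\<lambda>s. phi (\<lambda>k. w k + s * phi w k) i) has_field_derivative 0) (at 0)"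
proof -
  have "(\<Sum>j=1..m. of_int (H j i) * lin j (phi w) / lin j w) =
      (\<Sum>j=1..m. of_int (H j i) * ratio w j)"
    by (simp add: ratio_def)
  then show ?thesis
    using has_field_derivative_phi_line[OF assms, of "phi w"] sum_row_mult_ratio_eq_0[OF assms]
    by simp
qed

lemma has_field_derivative_ratio_along_phi:
  assumes "generic w" and j: "j \<in> {1..m}"
  shows "((\<lambda>s. ratio (\<lambda>k. w k + s * phi w k) j) has_field_derivative (- (ratio w j ^ 2)))
           (at 0)"
proof (cases "lin j w = 0")
  case True
  then have "\<forall>k\<in>{0..n}. H j k = 0" using generic_row_eq_0[OF assms] by blast
  then show ?thesis by (simp add: ratio_def lin_form_def)
next
  case False
  have "((\<lambda>s. \<Sum>k=0..n. of_int (H j k) * phi (\<lambda>k. w k + s * phi w k) k)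
      has_field_derivative (\<Sum>k=0..n. of_int (H j k) * 0)) (at 0)"
    by (intro DERIV_sum DERIV_cmult has_field_derivative_phi_along_phi[OF assms(1)]) simp
  then have num: "((\<lambda>s. lin j (phi (\<lambda>k. w k + s * phi w k))) has_field_derivative 0) (at 0)"
    by (simp add: lin_form_def)
  have den: "((\<lambda>s. lin j w + s * lin j (phi w)) has_field_derivative lin j (phi w)) (at 0)"
    by (auto intro!: derivative_eq_intros)
  from DERIV_divide[OF num den] False
  have "((\<lambda>s. lin j (phi (\<lambda>k. w k + s * phi w k)) / (lin j w + s * lin j (phi w)))
      has_field_derivative (- ((lin j (phi w) / lin j w) ^ 2))) (at 0)"
    by (simp add: power2_eq_square)
  then show ?thesis by (simp add: ratio_def lin_form_add_scaled)
qed

lemma sum_row_mult_ratio_power_eq_0: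
  assumes "generic w" and i: "i \<in> {0..n}"
  shows "(\<Sum>j=1..m. of_int (H j i) * ratio w j ^ k) = 0"
  using assms(1)
proof (induction k arbitrary: w rule: less_induct)
  case (less k)
  consider "k = 0" | "k = 1" | l where "k = Suc (Suc l)" by (metis One_nat_def not0_implies_Suc)
  then show ?case
  proof cases
    case 1
    have "(\<Sum>j=1..m. H j i) = 0" using friendly i unfolding friendly_pair_def horn_matrix_def by blast
    then have "(of_int (\<Sum>j=1..m. H j i) :: real) = 0" by simp
    then show ?thesis using 1 by simp
  next
    case 2
    then show ?thesis using sum_row_mult_ratio_eq_0[OF less.prems i] by simp
  next
    case 3
    let ?g = "\<lambda>s. \<Sum>j=1..m. of_int (H j i) * ratio (\<lambda>k. w k + s * phi w k) j ^ Suc l"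
    have "((\<lambda>s. ratio (\<lambda>k. w k + s * phi w k) j ^ Suc l) has_field_derivative
        of_nat (Suc l) * ratio w j ^ l * - (ratio w j ^ 2)) (at 0)" if "j \<in> {1..m}" for j
      using DERIV_power[OF has_field_derivative_ratio_along_phi[OF less.prems that], of "Suc l"]
      by (simp add: mult_ac)
    then have "(?g has_field_derivative (\<Sum>j=1..m. of_int (H j i) *
        (of_nat (Suc l) * ratio w j ^ l * - (ratio w j ^ 2)))) (at 0)"
      by (intro DERIV_sum DERIV_cmult) auto
    moreover have "eventually (\<lambda>s. ?g s = ?g 0) (nhds 0)"
      using eventually_generic_line[OF less.prems, of "phi w"]
    proof eventually_elim
      case (elim s)
      then show ?case using less.IH[of "Suc l"] less.prems 3 by simp
    qed
    ultimately have
      "(\<Sum>j=1..m. of_int (H j i) * (of_nat (Suc l) * ratio w j ^ l * - (ratio w j ^ 2))) = 0"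
      by (rule has_field_derivative_eq_0_if_eventually_const)
    moreover have "of_int (H j i) * (of_nat (Suc l) * ratio w j ^ l * - (ratio w j ^ 2))
        = - of_nat (Suc l) * (of_int (H j i) * ratio w j ^ k)" for j
      unfolding 3 by (simp add: power2_eq_square mult_ac) (simp add: algebra_simps)
    ultimately have "- of_nat (Suc l) * (\<Sum>j=1..m. of_int (H j i) * ratio w j ^ k) = 0"
      by (simp add: sum_distrib_left)
    then show ?thesis by simp
  qed
qed

lemma ratio_level_sums_eq_0:
  assumes "generic w" and "i \<in> {0..n}"
  shows "(\<Sum>j\<in>{j\<in>{1..m}. ratio w j = \<alpha>}. H j i) = 0"
proof -
  have "(\<Sum>j\<in>{j\<in>{1..m}. ratio w j = \<alpha>}. (of_int (H j i) :: real)) = 0"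
    by (rule power_sums_zero_imp_level_sums_zero)
      (simp, rule sum_row_mult_ratio_power_eq_0[OF assms])
  then have "(of_int (\<Sum>j\<in>{j\<in>{1..m}. ratio w j = \<alpha>}. H j i) :: real) = 0" by simp
  then show ?thesis by (simp only: of_int_eq_0_iff)
qed

lemma phi_shift_along_phi:
  assumes "generic u" and nonzero: "\<And>j. j \<in> {1..m} \<Longrightarrow> 1 + T * ratio u j \<noteq> 0"
    and i: "i \<in> {0..n}"
  shows "phi (\<lambda>k. u k + T * phi u k) i = phi u i"
proof -
  have "phi (\<lambda>k. u k + T * phi u k) i =
      lam i * (\<Prod>j=1..m. (lin j u * (1 + T * ratio u j)) powi H j i)"
    unfolding horn_phi_def[of m n H lam "\<lambda>k. u k + T * phi u k" i]
    by (rule arg_cong[where f = "(*) (lam i)"], rule prod.cong)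
      (simp_all add: lin_shift_along_phi[OF assms(1)])
  also have "\<dots> = lam i * (\<Prod>j=1..m. lin j u powi H j i * (1 + T * ratio u j) powi H j i)"
    by (simp only: power_int_mult_distrib)
  also have "\<dots> = phi u i * (\<Prod>j=1..m. (1 + T * ratio u j) powi H j i)"
    by (simp only: horn_phi_def prod.distrib mult.assoc)
  also have "(\<Prod>j=1..m. (1 + T * ratio u j) powi H j i) = 1"
  proof (rule prod_power_int_eq_1_if_level_sums_zero[where g = "\<lambda>x. 1 + T * x" and q = "ratio u"])
    show "(\<Sum>j\<in>{j\<in>{1..m}. ratio u j = \<alpha>}. H j i) = 0" for \<alpha>
      by (rule ratio_level_sums_eq_0[OF assms(1) i])
  qed (simp_all add: nonzero)
  finally show ?thesis by simp
qed

lemma phi_le_1: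
  assumes "generic w" and "\<And>i. i \<in> {0..n} \<Longrightarrow> 0 < phi w i" and "i \<in> {0..n}"
  shows "phi w i \<le> 1"
proof -
  have "phi w i \<le> (\<Sum>i=0..n. phi w i)"
    using assms(2,3) by (intro member_le_sum) (auto simp: less_imp_le)
  then show ?thesis using sum_phi_eq_1[OF assms(1)] by simp
qed

lemma exists_pos_generic_point:
  assumes "phi_defined m n H u" and phi_pos: "\<And>i. i \<in> {0..n} \<Longrightarrow> 0 < phi u i"
  obtains w where "generic w" "\<And>k. k \<in> {0..n} \<Longrightarrow> 0 < w k"
    and "\<And>i. i \<in> {0..n} \<Longrightarrow> 0 < phi w i"
proof -
  have "generic u" using generic_if_phi_pos assms by blast
  have "eventually (\<lambda>T. 0 < u k + T * phi u k) at_top" if "k \<in> {0..n}" for k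
    using eventually_gt_at_top[of "- u k / phi u k"]
    by eventually_elim (use phi_pos[OF that] in \<open>simp add: field_simps\<close>)
  moreover have "eventually (\<lambda>T. 1 + T * ratio u j \<noteq> 0) at_top" for j
  proof (cases "ratio u j = 0")
    case False
    show ?thesis
      using eventually_gt_at_top[of "1 / \<bar>ratio u j\<bar>"]
    proof eventually_elim
      case (elim T)
      then have "1 < T * \<bar>ratio u j\<bar>" using False by (simp add: field_simps)
      also have "\<dots> \<le> \<bar>T * ratio u j\<bar>" by (simp add: abs_mult mult_right_mono)
      finally show ?case by (auto simp: abs_if split: if_splits)
    qed
  qed simp
  ultimately have "eventually (\<lambda>T. (\<forall>k\<in>{0..n}. 0 < u k + T * phi u k) \<and>
      (\<forall>j\<in>{1..m}. 1 + T * ratio u j \<noteq> 0)) at_top"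
    by (intro eventually_conj eventually_ball_finite) auto
  then obtain T where pos: "\<And>k. k \<in> {0..n} \<Longrightarrow> 0 < u k + T * phi u k"
    and nonzero: "\<And>j. j \<in> {1..m} \<Longrightarrow> 1 + T * ratio u j \<noteq> 0"
    unfolding eventually_at_top_linorder by (meson order_refl)
  show ?thesis
  proof
    show "generic (\<lambda>k. u k + T * phi u k)"
      using \<open>generic u\<close> nonzero
      by (auto simp: horn_generic_def lin_shift_along_phi[OF \<open>generic u\<close>])
    show "0 < phi (\<lambda>k. u k + T * phi u k) i" if "i \<in> {0..n}" for i
      using phi_shift_along_phi[OF \<open>generic u\<close> nonzero that] phi_pos[OF that] by simp
  qed (rule pos)
qed

end

locale horn_segment = friendly +
  fixes w0 v :: "nat \<Rightarrow> real"
  assumes generic_w0: "generic w0"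
    and pos_w0: "\<And>k. k \<in> {0..n} \<Longrightarrow> 0 < w0 k"
    and phi_pos_w0: "\<And>i. i \<in> {0..n} \<Longrightarrow> 0 < phi w0 i"
    and pos_v: "\<And>k. k \<in> {0..n} \<Longrightarrow> 0 < v k"
begin

definition seg :: "real \<Rightarrow> nat \<Rightarrow> real" where
  "seg t k = w0 k + t * (v k - w0 k)"

abbreviation slope :: "nat \<Rightarrow> real" where
  "slope j \<equiv> lin j (\<lambda>k. v k - w0 k)"

abbreviation phi_pos :: "real \<Rightarrow> bool" where
  "phi_pos t \<equiv> \<forall>i\<in>{0..n}. 0 < phi (seg t) i"

definition crossings :: "real set" where
  "crossings = {t. \<not> generic (seg t)}"

abbreviation phi_pos_before :: "real \<Rightarrow> bool" where
  "phi_pos_before t1 \<equiv> \<forall>s\<in>{0..<t1}. s \<notin> crossings \<longrightarrow> phi_pos s"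

definition vanishing :: "real \<Rightarrow> nat set" where
  "vanishing t1 = {j\<in>{1..m}. lin j (seg t1) = 0}"

definition vanishing_order :: "real \<Rightarrow> nat \<Rightarrow> int" where
  "vanishing_order t1 i = (\<Sum>j\<in>vanishing t1. H j i)"

definition regular_part :: "real \<Rightarrow> nat \<Rightarrow> real \<Rightarrow> real" where
  "regular_part t1 i t = lam i * (\<Prod>j\<in>vanishing t1. slope j powi H j i) *
     (\<Prod>j\<in>{1..m} - vanishing t1. lin j (seg t) powi H j i)"

lemma lin_seg: "lin j (seg t) = lin j w0 + t * slope j"
  unfolding seg_def by (rule lin_form_add_scaled)

lemma seg_0 [simp]: "seg 0 = w0" and seg_1 [simp]: "seg 1 = v"
  by (auto simp: seg_def)

lemma seg_pos:
  assumes "t \<in> {0..1}" and "k \<in> {0..n}"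
  shows "0 < seg t k"
proof -
  have "seg t k = (1 - t) * w0 k + t * v k" unfolding seg_def by (simp add: algebra_simps)
  moreover have "0 \<le> (1 - t) * w0 k" "0 \<le> t * v k"
    using assms pos_w0 pos_v by (simp_all add: less_imp_le)
  moreover have "0 < (1 - t) * w0 k \<or> 0 < t * v k"
    using assms pos_w0 pos_v by (cases "t = 1") auto
  ultimately show ?thesis by linarith
qed

lemma lin_w0_nonzero:
  "j \<in> {1..m} \<Longrightarrow> i \<in> {0..n} \<Longrightarrow> H j i \<noteq> 0 \<Longrightarrow> lin j w0 \<noteq> 0"
  using generic_row_eq_0[OF generic_w0] by blast

lemma finite_crossings: "finite crossings"
proof (rule finite_subset)
  show "crossings \<subseteq> (\<lambda>j. - lin j w0 / slope j) ` {1..m}"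
  proof
    fix t assume "t \<in> crossings"
    then obtain j i where j: "j \<in> {1..m}" "i \<in> {0..n}" "H j i \<noteq> 0" "lin j (seg t) = 0"
      unfolding crossings_def horn_generic_def by blast
    then have eq: "lin j w0 + t * slope j = 0" by (simp add: lin_seg)
    moreover have "slope j \<noteq> 0" using eq lin_w0_nonzero[OF j(1-3)] by auto
    ultimately have "t = - lin j w0 / slope j" by (simp add: field_simps)
    then show "t \<in> (\<lambda>j. - lin j w0 / slope j) ` {1..m}" using j(1) by blast
  qed
qed simp

lemma vanishing_row_eq_0:
  "t \<notin> crossings \<Longrightarrow> j \<in> vanishing t \<Longrightarrow> i \<in> {0..n} \<Longrightarrow> H j i = 0"
  unfolding crossings_def vanishing_def using generic_row_eq_0 by blast

lemma phi_seg_factor: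
  assumes "t \<noteq> t1 \<or> t \<notin> crossings" and i: "i \<in> {0..n}"
  shows "phi (seg t) i = regular_part t1 i t * (t - t1) powi vanishing_order t1 i"
proof (cases "t = t1")
  case True
  then have zero: "H j i = 0" if "j \<in> vanishing t1" for j
    using assms vanishing_row_eq_0 that by blast
  have "phi (seg t) i = lam i * ((\<Prod>j\<in>{1..m} - vanishing t1. lin j (seg t) powi H j i) *
      (\<Prod>j\<in>vanishing t1. lin j (seg t) powi H j i))"
    unfolding horn_phi_def by (subst prod.subset_diff[of "vanishing t1"]) (auto simp: vanishing_def)
  then show ?thesis
    using zero by (simp add: regular_part_def vanishing_order_def)
next
  case False
  have "vanishing t1 = {j\<in>{1..m}. lin j w0 + t1 * slope j = 0}"
    by (simp add: vanishing_def lin_seg)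
  then show ?thesis
    using prod_power_int_affine_split[of "{1..m}" t t1 "\<lambda>j. lin j w0" slope "\<lambda>j. H j i"] False
    unfolding horn_phi_def regular_part_def vanishing_order_def lin_seg
    by (simp add: mult_ac)
qed

lemma regular_part_tendsto:
  "(regular_part t1 i \<longlongrightarrow> regular_part t1 i t1) (at t1 within S)"
  unfolding regular_part_def lin_seg
  by (intro tendsto_intros) (auto simp: vanishing_def lin_seg)

lemma regular_part_nonzero:
  assumes "i \<in> {0..n}"
  shows "regular_part t1 i t1 \<noteq> 0"
proof -
  have "lam i \<noteq> 0" using friendly assms unfolding friendly_pair_def by blast
  moreover have "slope j \<noteq> 0" if "j \<in> vanishing t1" "H j i \<noteq> 0" for j
    using that lin_w0_nonzero[OF _ assms] by (auto simp: vanishing_def lin_seg)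
  ultimately show ?thesis
    by (auto simp: regular_part_def vanishing_def prod_zero_iff)
qed

lemma sum_vanishing_order_mult_seg:
  "(\<Sum>i=0..n. of_int (vanishing_order t1 i) * seg t1 i) = 0"
proof -
  have "(\<Sum>i=0..n. of_int (vanishing_order t1 i) * seg t1 i) =
      (\<Sum>j\<in>vanishing t1. lin j (seg t1))"
    by (simp add: vanishing_order_def lin_form_def sum_distrib_right sum.swap[of _ "vanishing t1"])
  also have "\<dots> = 0" by (simp add: vanishing_def)
  finally show ?thesis .
qed

lemma eventually_at_left_phi_pos:
  assumes "0 < t1" and left: "phi_pos_before t1"
  shows "eventually (\<lambda>s. s \<noteq> t1 \<and> s \<notin> crossings \<and> phi_pos s) (at_left t1)"
proof -
  have "eventually (\<lambda>s. s \<in> {0<..<t1}) (at_left t1)"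
    using assms(1) by (rule eventually_at_left_real)
  moreover have "eventually (\<lambda>s. \<forall>c\<in>crossings. s \<noteq> c) (at_left t1)"
    using finite_crossings by (intro eventually_ball_finite) (auto intro: eventually_neq_at_within)
  ultimately show ?thesis
    by eventually_elim (use left in auto)
qed

lemma vanishing_order_eq_0:
  assumes t1: "t1 \<in> {0..1}" and left: "phi_pos_before t1"
    and i: "i \<in> {0..n}"
  shows "vanishing_order t1 i = 0"
proof (cases "t1 = 0")
  case True
  then have "0 \<notin> crossings" using generic_w0 by (simp add: crossings_def)
  then show ?thesis
    using vanishing_row_eq_0 True i by (simp add: vanishing_order_def)
next
  case False
  then have "0 < t1" using t1 by simp
  have nonneg: "0 \<le> vanishing_order t1 i'" if i': "i' \<in> {0..n}" for i'
  proof (rule power_int_exponent_nonneg_if_bounded)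
    show "(regular_part t1 i' \<longlongrightarrow> regular_part t1 i' t1) (at_left t1)"
      by (rule regular_part_tendsto)
    show "regular_part t1 i' t1 \<noteq> 0" by (rule regular_part_nonzero[OF i'])
    show "eventually (\<lambda>t. phi (seg t) i' =
        regular_part t1 i' t * (t - t1) powi vanishing_order t1 i' \<and> \<bar>phi (seg t) i'\<bar> \<le> 1)
      (at_left t1)"
      using eventually_at_left_phi_pos[OF \<open>0 < t1\<close> left]
    proof eventually_elim
      case (elim t)
      then have "0 < phi (seg t) i'" and "phi (seg t) i' \<le> 1"
        using phi_le_1[of "seg t" i'] i' by (auto simp: crossings_def)
      then show ?case using phi_seg_factor[of t t1 i'] elim i' by simp
    qed
  qed
  have terms_nonneg: "0 \<le> of_int (vanishing_order t1 i') * seg t1 i'" if "i' \<in> {0..n}" for i'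
    using nonneg[OF that] seg_pos[OF t1 that] by simp
  have "of_int (vanishing_order t1 i) * seg t1 i = 0"
    using sum_nonneg_eq_0_iff[of "{0..n}" "\<lambda>i. of_int (vanishing_order t1 i) * seg t1 i"]
      terms_nonneg sum_vanishing_order_mult_seg i by simp
  then show ?thesis using seg_pos[OF t1 i] by simp
qed

lemma regular_part_pos:
  assumes t1: "t1 \<in> {0..1}" and left: "phi_pos_before t1"
    and i: "i \<in> {0..n}"
  shows "0 < regular_part t1 i t1"
proof (cases "t1 = 0")
  case True
  then have "0 \<notin> crossings" using generic_w0 by (simp add: crossings_def)
  then show ?thesis
    using phi_seg_factor[of 0 0 i] phi_pos_w0[OF i] vanishing_order_eq_0[OF t1 left i] True i
    by simp
next
  case False
  then have "0 < t1" using t1 by simp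
  have "0 \<le> regular_part t1 i t1"
  proof (rule tendsto_lowerbound)
    show "(regular_part t1 i \<longlongrightarrow> regular_part t1 i t1) (at_left t1)"
      by (rule regular_part_tendsto)
    show "eventually (\<lambda>t. 0 \<le> regular_part t1 i t) (at_left t1)"
      using eventually_at_left_phi_pos[OF \<open>0 < t1\<close> left]
      by eventually_elim
        (use phi_seg_factor i vanishing_order_eq_0[OF t1 left i] in \<open>fastforce simp: less_imp_le\<close>)
  qed simp
  then show ?thesis using regular_part_nonzero[OF i, of t1] by simp
qed

lemma eventually_nhds_phi_pos:
  assumes t1: "t1 \<in> {0..1}" and left: "phi_pos_before t1"
  shows "eventually (\<lambda>s. s \<notin> crossings \<longrightarrow> phi_pos s) (nhds t1)"
proof -
  have "eventually (\<lambda>s. 0 < regular_part t1 i s) (nhds t1)" if i: "i \<in> {0..n}" for i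
    unfolding eventually_nhds_conv_at
    using order_tendstoD(1)[OF regular_part_tendsto regular_part_pos[OF t1 left i]]
      regular_part_pos[OF t1 left i] by blast
  then have "eventually (\<lambda>s. \<forall>i\<in>{0..n}. 0 < regular_part t1 i s) (nhds t1)"
    by (intro eventually_ball_finite) auto
  then show ?thesis
  proof eventually_elim
    case (elim s)
    show ?case
      using elim phi_seg_factor[of s t1, OF disjI2] vanishing_order_eq_0[OF t1 left] by auto
  qed
qed

lemma phi_pos_end:
  assumes "generic v" and "i \<in> {0..n}"
  shows "0 < phi v i"
proof -
  have "1 \<notin> crossings \<longrightarrow> phi_pos 1"
    by (rule unit_interval_continuation, rule eventually_nhds_phi_pos) auto
  then show ?thesis using assms by (simp add: crossings_def)
qed

end

theorem lemma4p2:
  fixes m n :: nat and H :: "nat \<Rightarrow> nat \<Rightarrow> int" and lam :: "nat \<Rightarrow> real"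
  assumes "friendly_pair m n H lam"
    and "\<exists>u. phi_defined m n H u \<and> (\<forall>i\<in>{0..n}. horn_phi m n H lam u i > 0)"
  shows "\<forall>v. (\<forall>i\<in>{0..n}. v i > 0) \<and> phi_defined m n H v \<longrightarrow>
           (\<forall>i\<in>{0..n}. horn_phi m n H lam v i > 0)"
proof (intro allI impI ballI)
  fix v i
  assume v: "(\<forall>i\<in>{0..n}. v i > 0) \<and> phi_defined m n H v" and i: "i \<in> {0..n}"
  interpret friendly m n H lam
    by unfold_locales (rule assms(1))
  obtain u where u: "phi_defined m n H u" "\<And>i. i \<in> {0..n} \<Longrightarrow> 0 < phi u i"
    using assms(2) by blast
  obtain w where "generic w" "\<And>k. k \<in> {0..n} \<Longrightarrow> 0 < w k"
    and "\<And>i. i \<in> {0..n} \<Longrightarrow> 0 < phi w i"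
    using exists_pos_generic_point[OF u] by blast
  then interpret horn_segment m n H lam w v
    using v by unfold_locales auto
  show "0 < horn_phi m n H lam v i"
    using phi_pos_end generic_if_pos v i by blast
qed

end
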